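(* Suppose Assumptions 1 and 4 hold, and let $d^*=\max_iL_{ii}$ be the maximal degree of $\mathcal G$. Then $\bar{\mathfrak A}$ is maximally monotone, and $\bar{\mathfrak B}$ is $\beta_E$-cocoercive for every $\beta_E\in\big(0,\tfrac12\min\{\bar\chi,\tfrac1{2d^*}\}\big)$.
   Context: Game: players $i=1,\dots,N$, $x_i\in\Omega_i\subseteq\mathbb R^{n_i}$, $n=\sum n_i$, $\Omega=\prod\Omega_i$, costs $f_i(x_i,x_{-i})$ defined and $C^1$ in $x_i$ on $\mathbb R^n$, data $A_i\in\mathbb R^{m\times n_i}$, $b_i\in\mathbb R^m$, $X=\Omega\cap\{\sum A_ix_i=\sum b_i\}$. Assumption 1: each $\Omega_i$ closed convex with nonempty interior; $X$ and each $\{x_i\in\Omega_i:(x_i,x_{-i})\in X\}$ have nonempty relative interior; $f_i$ convex in $x_i$. Graph: connected undirected graph, $N$ nodes, $M$ arbitrarily oriented edges, incidence $V$ ($V_{il}=1$ if $e_l$ points to $i$, $-1$ if starts at $i$, $0$ else), $L=VV^T$; $\mathbf V=V\otimes I_m$, $\mathbf L=L\otimes I_n$, $\mathbf A=\mathrm{diag}(A_i)$, $\mathbf b=\mathrm{col}(b_i)$. $\mathbf x=\mathrm{col}(x^{(1)},\dots,x^{(N)})\in\mathbb R^{Nn}$; $\mathcal R_i=[0_{n_i\times n_{<i}}\ I_{n_i}\ 0_{n_i\times n_{>i}}]$, $\mathcal R=\mathrm{diag}(\mathcal R_1,\dots,\mathcal R_N)$; $\mathbf F(\mathbf x)=\mathrm{col}(\nabla_{x_i}f_i(x^{(i)}))_i$.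 Assumption 4: for all $\mathbf x,\mathbf x'\in\mathbb R^{Nn}$, $\langle\mathbf x-\mathbf x',\mathcal R^T\mathbf F(\mathbf x)-\mathcal R^T\mathbf F(\mathbf x')\rangle\ge\bar\chi\|\mathbf F(\mathbf x)-\mathbf F(\mathbf x')\|^2$ with $\bar\chi>0$. $\bar{\mathfrak A}(\mathbf W)=\mathrm{col}(-\mathbf V\mathbf z-\mathbf A\mathcal R\mathbf x,\ \mathbf V^T\Lambda,\ \mathcal R^TN_\Omega(\mathcal R\mathbf x)+\mathcal R^T\mathbf A^T\Lambda)$, $\bar{\mathfrak B}(\mathbf W)=\mathrm{col}(\mathbf b,\mathbf 0,\mathcal R^T\mathbf F(\mathbf x)+\mathbf L\mathbf x)$ for $\mathbf W=\mathrm{col}(\Lambda,\mathbf z,\mathbf x)\in\mathbb R^{Nm}\times\mathbb R^{Mm}\times\mathbb R^{Nn}$. $\beta$-cocoercive means $\langle u-v,Su-Sv\rangle\ge\beta\|Su-Sv\|^2$. *)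

theory Defs
  imports "HOL-Analysis.Analysis"
begin

text \<open>A vector of R^I (I a finite index set) is a real function that vanishes off I.
  All dimensions of the paper (n_i, n, Nn, Nm, Mm, ...) vary with the data, so we use
  explicit index sets instead of type-indexed dimensions.  The topology used below is
  the product topology on functions, which restricted to space I is the Euclidean one.\<close>

definition space :: "'a set \<Rightarrow> ('a \<Rightarrow> real) set" where
  "space I = {u. \<forall>k. k \<notin> I \<longrightarrow> u k = 0}"

definition ip :: "'a set \<Rightarrow> ('a \<Rightarrow> real) \<Rightarrow> ('a \<Rightarrow> real) \<Rightarrow> real" where
  "ip I u v = (\<Sum>k\<in>I. u k * v k)"

definition vnorm :: "'a set \<Rightarrow> ('a \<Rightarrow> real) \<Rightarrow> real" where
  "vnorm I u = sqrt (ip I u u)"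

definition vsub :: "('a \<Rightarrow> real) \<Rightarrow> ('a \<Rightarrow> real) \<Rightarrow> ('a \<Rightarrow> real)" where
  "vsub u v = (\<lambda>k. u k - v k)"

definition convex_set :: "'a set \<Rightarrow> ('a \<Rightarrow> real) set \<Rightarrow> bool" where
  "convex_set I C \<longleftrightarrow> C \<subseteq> space I \<and>
     (\<forall>x\<in>C. \<forall>y\<in>C. \<forall>t::real. 0 \<le> t \<and> t \<le> 1 \<longrightarrow> (\<lambda>k. (1 - t) * x k + t * y k) \<in> C)"

definition ahull :: "('a \<Rightarrow> real) set \<Rightarrow> ('a \<Rightarrow> real) set" where
  "ahull S = {y. \<exists>F u. finite F \<and> F \<noteq> {} \<and> F \<subseteq> S \<and> sum u F = 1 \<and>
                      y = (\<lambda>k. \<Sum>x\<in>F. u x * x k)}"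

definition nonempty_interior_in :: "'a set \<Rightarrow> ('a \<Rightarrow> real) set \<Rightarrow> bool" where
  "nonempty_interior_in I S \<longleftrightarrow>
     (\<exists>U. openin (top_of_set (space I)) U \<and> U \<noteq> {} \<and> U \<subseteq> S)"

definition nonempty_rel_interior :: "('a \<Rightarrow> real) set \<Rightarrow> bool" where
  "nonempty_rel_interior S \<longleftrightarrow>
     (\<exists>U. openin (top_of_set (ahull S)) U \<and> U \<noteq> {} \<and> U \<subseteq> S)"

definition normal_cone :: "'a set \<Rightarrow> ('a \<Rightarrow> real) set \<Rightarrow> ('a \<Rightarrow> real) \<Rightarrow> ('a \<Rightarrow> real) set" where
  "normal_cone I C y = (if y \<in> C then {v \<in> space I. \<forall>y'\<in>C. ip I v (vsub y' y) \<le> 0} else {})"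

definition has_grad :: "'a set \<Rightarrow> (('a \<Rightarrow> real) \<Rightarrow> real) \<Rightarrow> ('a \<Rightarrow> real) \<Rightarrow> ('a \<Rightarrow> real) \<Rightarrow> bool" where
  "has_grad I \<phi> y gv \<longleftrightarrow> gv \<in> space I \<and>
     (\<forall>\<epsilon>>0. \<exists>\<delta>>0. \<forall>h\<in>space I. vnorm I h < \<delta> \<longrightarrow>
        \<bar>\<phi> (\<lambda>k. y k + h k) - \<phi> y - ip I gv h\<bar> \<le> \<epsilon> * vnorm I h)"

definition monotone_op :: "'a set \<Rightarrow> (('a \<Rightarrow> real) \<Rightarrow> ('a \<Rightarrow> real) set) \<Rightarrow> bool" where
  "monotone_op I A \<longleftrightarrow> (\<forall>u\<in>space I. \<forall>v\<in>space I. \<forall>a\<in>A u. \<forall>b\<in>A v.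
       ip I (vsub u v) (vsub a b) \<ge> 0)"

definition maximally_monotone :: "'a set \<Rightarrow> (('a \<Rightarrow> real) \<Rightarrow> ('a \<Rightarrow> real) set) \<Rightarrow> bool" where
  "maximally_monotone I A \<longleftrightarrow>
     (\<forall>u\<in>space I. A u \<subseteq> space I) \<and> monotone_op I A \<and>
     (\<forall>u\<in>space I. \<forall>a\<in>space I.
        (\<forall>v\<in>space I. \<forall>b\<in>A v. ip I (vsub u v) (vsub a b) \<ge> 0) \<longrightarrow> a \<in> A u)"

definition cocoercive :: "'a set \<Rightarrow> (('a \<Rightarrow> real) \<Rightarrow> ('a \<Rightarrow> real)) \<Rightarrow> real \<Rightarrow> bool" where
  "cocoercive I S \<beta> \<longleftrightarrow> (\<forall>u\<in>space I. \<forall>v\<in>space I.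
       ip I (vsub u v) (vsub (S u) (S v)) \<ge> \<beta> * ip I (vsub (S u) (S v)) (vsub (S u) (S v)))"

text \<open>Players are 0..N-1; player i's decision x_i lives in R^{n i} (indices k < n i).
  A profile x in R^n is a function on PI = {(i,k). i < N, k < n i}.
  A stacked estimate vector bold-x in R^{Nn} is a function on XI = {(j,i,k)},
  with x^(j) = est xx j.\<close>

definition PI :: "nat \<Rightarrow> (nat \<Rightarrow> nat) \<Rightarrow> (nat \<times> nat) set" where
  "PI N n = {(i, k). i < N \<and> k < n i}"

definition XI :: "nat \<Rightarrow> (nat \<Rightarrow> nat) \<Rightarrow> (nat \<times> nat \<times> nat) set" where
  "XI N n = {(j, i, k). j < N \<and> i < N \<and> k < n i}"

definition blk :: "nat \<Rightarrow> (nat \<times> nat \<Rightarrow> real) \<Rightarrow> (nat \<Rightarrow> real)" where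
  "blk i x = (\<lambda>k. x (i, k))"

definition upd :: "nat \<Rightarrow> (nat \<Rightarrow> real) \<Rightarrow> (nat \<times> nat \<Rightarrow> real) \<Rightarrow> (nat \<times> nat \<Rightarrow> real)" where
  "upd i y x = (\<lambda>(j, k). if j = i then y k else x (j, k))"

definition est :: "(nat \<times> nat \<times> nat \<Rightarrow> real) \<Rightarrow> nat \<Rightarrow> (nat \<times> nat \<Rightarrow> real)" where
  "est xx j = (\<lambda>(i, k). xx (j, i, k))"

definition OmegaP :: "nat \<Rightarrow> (nat \<Rightarrow> nat) \<Rightarrow> (nat \<Rightarrow> (nat \<Rightarrow> real) set) \<Rightarrow> (nat \<times> nat \<Rightarrow> real) set" where
  "OmegaP N n \<Omega> = {x \<in> space (PI N n). \<forall>i<N. blk i x \<in> \<Omega> i}"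

text \<open>X = Omega intersected with {sum_i A_i x_i = sum_i b_i}; A i r k is entry (r,k) of A_i,
  b i r is entry r of b_i.\<close>
definition Xset :: "nat \<Rightarrow> (nat \<Rightarrow> nat) \<Rightarrow> nat \<Rightarrow> (nat \<Rightarrow> (nat \<Rightarrow> real) set)
     \<Rightarrow> (nat \<Rightarrow> nat \<Rightarrow> nat \<Rightarrow> real) \<Rightarrow> (nat \<Rightarrow> nat \<Rightarrow> real) \<Rightarrow> (nat \<times> nat \<Rightarrow> real) set" where
  "Xset N n m \<Omega> A b = {x \<in> OmegaP N n \<Omega>. \<forall>r<m.
      (\<Sum>i<N. \<Sum>k<n i. A i r k * x (i, k)) = (\<Sum>i<N. b i r)}"

definition assumption1 :: "nat \<Rightarrow> (nat \<Rightarrow> nat) \<Rightarrow> nat \<Rightarrow> (nat \<Rightarrow> (nat \<Rightarrow> real) set)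
     \<Rightarrow> (nat \<Rightarrow> nat \<Rightarrow> nat \<Rightarrow> real) \<Rightarrow> (nat \<Rightarrow> nat \<Rightarrow> real)
     \<Rightarrow> (nat \<Rightarrow> (nat \<times> nat \<Rightarrow> real) \<Rightarrow> real) \<Rightarrow> bool" where
  "assumption1 N n m \<Omega> A b f \<longleftrightarrow>
     (\<forall>i<N. \<Omega> i \<subseteq> space {..<n i} \<and> closed (\<Omega> i) \<and> convex_set {..<n i} (\<Omega> i)
            \<and> nonempty_interior_in {..<n i} (\<Omega> i))
   \<and> nonempty_rel_interior (Xset N n m \<Omega> A b)
   \<and> (\<forall>i<N. \<forall>x\<in>space (PI N n).
        let S = {y \<in> \<Omega> i. upd i y x \<in> Xset N n m \<Omega> A b} in S \<noteq> {} \<longrightarrow> nonempty_rel_interior S)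
   \<and> (\<forall>i<N. \<forall>x\<in>space (PI N n). \<forall>y\<in>space {..<n i}. \<forall>y'\<in>space {..<n i}. \<forall>t::real.
        0 \<le> t \<and> t \<le> 1 \<longrightarrow>
        f i (upd i (\<lambda>k. (1 - t) * y k + t * y' k) x)
          \<le> (1 - t) * f i (upd i y x) + t * f i (upd i y' x))"

text \<open>g i x = nabla_{x_i} f_i(x): f_i is C^1 in x_i on all of R^n with this partial gradient.\<close>
definition partial_gradients :: "nat \<Rightarrow> (nat \<Rightarrow> nat) \<Rightarrow> (nat \<Rightarrow> (nat \<times> nat \<Rightarrow> real) \<Rightarrow> real)
     \<Rightarrow> (nat \<Rightarrow> (nat \<times> nat \<Rightarrow> real) \<Rightarrow> (nat \<Rightarrow> real)) \<Rightarrow> bool" where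
  "partial_gradients N n f g \<longleftrightarrow>
     (\<forall>i<N. \<forall>x\<in>space (PI N n).
        (\<forall>y\<in>space {..<n i}. has_grad {..<n i} (\<lambda>y'. f i (upd i y' x)) y (g i (upd i y x)))
      \<and> continuous_on (space {..<n i}) (\<lambda>y. g i (upd i y x)))"

text \<open>F(bold x) = col(nabla_{x_i} f_i(x^(i)))_i, an element of R^n, and R^T.\<close>
definition FF :: "nat \<Rightarrow> (nat \<Rightarrow> nat) \<Rightarrow> (nat \<Rightarrow> (nat \<times> nat \<Rightarrow> real) \<Rightarrow> (nat \<Rightarrow> real))
     \<Rightarrow> (nat \<times> nat \<times> nat \<Rightarrow> real) \<Rightarrow> (nat \<times> nat \<Rightarrow> real)" where
  "FF N n g xx = (\<lambda>(i, k). if i < N \<and> k < n i then g i (est xx i) k else 0)"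

definition RT :: "nat \<Rightarrow> (nat \<Rightarrow> nat) \<Rightarrow> (nat \<times> nat \<Rightarrow> real) \<Rightarrow> (nat \<times> nat \<times> nat \<Rightarrow> real)" where
  "RT N n v = (\<lambda>(j, i, k). if j < N \<and> i = j \<and> k < n j then v (j, k) else 0)"

definition assumption4 :: "nat \<Rightarrow> (nat \<Rightarrow> nat) \<Rightarrow> (nat \<Rightarrow> (nat \<times> nat \<Rightarrow> real) \<Rightarrow> (nat \<Rightarrow> real))
     \<Rightarrow> real \<Rightarrow> bool" where
  "assumption4 N n g chi \<longleftrightarrow> chi > 0 \<and>
     (\<forall>xx\<in>space (XI N n). \<forall>xx'\<in>space (XI N n).
        ip (XI N n) (vsub xx xx') (vsub (RT N n (FF N n g xx)) (RT N n (FF N n g xx')))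
          \<ge> chi * ip (PI N n) (vsub (FF N n g xx) (FF N n g xx')) (vsub (FF N n g xx) (FF N n g xx')))"

text \<open>Edge l (l < M) is oriented from etl l to ehd l.\<close>
definition graph_ok :: "nat \<Rightarrow> nat \<Rightarrow> (nat \<Rightarrow> nat) \<Rightarrow> (nat \<Rightarrow> nat) \<Rightarrow> bool" where
  "graph_ok N M etl ehd \<longleftrightarrow>
     (\<forall>l<M. etl l < N \<and> ehd l < N \<and> etl l \<noteq> ehd l)
   \<and> (\<forall>l<M. \<forall>l'<M. l \<noteq> l' \<longrightarrow> {etl l, ehd l} \<noteq> {etl l', ehd l'})
   \<and> (\<forall>i<N. \<forall>j<N. (i, j) \<in> ({(etl l, ehd l) | l. l < M} \<union> {(ehd l, etl l) | l. l < M})\<^sup>*)"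

definition Vinc :: "(nat \<Rightarrow> nat) \<Rightarrow> (nat \<Rightarrow> nat) \<Rightarrow> nat \<Rightarrow> nat \<Rightarrow> real" where
  "Vinc etl ehd i l = (if ehd l = i then 1 else if etl l = i then -1 else 0)"

definition Lap :: "nat \<Rightarrow> (nat \<Rightarrow> nat) \<Rightarrow> (nat \<Rightarrow> nat) \<Rightarrow> nat \<Rightarrow> nat \<Rightarrow> real" where
  "Lap M etl ehd i j = (\<Sum>l<M. Vinc etl ehd i l * Vinc etl ehd j l)"

definition dstar :: "nat \<Rightarrow> nat \<Rightarrow> (nat \<Rightarrow> nat) \<Rightarrow> (nat \<Rightarrow> nat) \<Rightarrow> real" where
  "dstar N M etl ehd = Max {Lap M etl ehd i i | i. i < N}"

text \<open>W = col(Lambda, z, bold x): Lam j r is entry r of lambda_j, Zed l r entry r of z_l,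
  Xe j i k entry k of block i of x^(j).\<close>
datatype widx = Lam nat nat | Zed nat nat | Xe nat nat nat

definition WI :: "nat \<Rightarrow> nat \<Rightarrow> (nat \<Rightarrow> nat) \<Rightarrow> nat \<Rightarrow> widx set" where
  "WI N M n m = {Lam j r | j r. j < N \<and> r < m} \<union> {Zed l r | l r. l < M \<and> r < m}
              \<union> {Xe j i k | j i k. j < N \<and> i < N \<and> k < n i}"

definition xpart :: "(widx \<Rightarrow> real) \<Rightarrow> (nat \<times> nat \<times> nat \<Rightarrow> real)" where
  "xpart W = (\<lambda>(j, i, k). W (Xe j i k))"

text \<open>R bold x = col(x^(j)_j) in R^n.\<close>
definition Rx :: "nat \<Rightarrow> (nat \<Rightarrow> nat) \<Rightarrow> (widx \<Rightarrow> real) \<Rightarrow> (nat \<times> nat \<Rightarrow> real)" where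
  "Rx N n W = (\<lambda>(j, k). if j < N \<and> k < n j then W (Xe j j k) else 0)"

definition Abar :: "nat \<Rightarrow> nat \<Rightarrow> (nat \<Rightarrow> nat) \<Rightarrow> nat \<Rightarrow> (nat \<Rightarrow> nat) \<Rightarrow> (nat \<Rightarrow> nat)
     \<Rightarrow> (nat \<Rightarrow> (nat \<Rightarrow> real) set) \<Rightarrow> (nat \<Rightarrow> nat \<Rightarrow> nat \<Rightarrow> real)
     \<Rightarrow> (widx \<Rightarrow> real) \<Rightarrow> (widx \<Rightarrow> real) set" where
  "Abar N M n m etl ehd \<Omega> A W =
     {W'. \<exists>v \<in> normal_cone (PI N n) (OmegaP N n \<Omega>) (Rx N n W).
        W' = (\<lambda>idx. case idx of
            Lam j r \<Rightarrow> if j < N \<and> r < m then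
                 - (\<Sum>l<M. Vinc etl ehd j l * W (Zed l r)) - (\<Sum>k<n j. A j r k * W (Xe j j k))
               else 0
          | Zed l r \<Rightarrow> if l < M \<and> r < m then (\<Sum>j<N. Vinc etl ehd j l * W (Lam j r)) else 0
          | Xe j i k \<Rightarrow> if j < N \<and> i = j \<and> k < n j then
                 v (j, k) + (\<Sum>r<m. A j r k * W (Lam j r))
               else 0)}"

definition Bbar :: "nat \<Rightarrow> nat \<Rightarrow> (nat \<Rightarrow> nat) \<Rightarrow> nat \<Rightarrow> (nat \<Rightarrow> nat) \<Rightarrow> (nat \<Rightarrow> nat)
     \<Rightarrow> (nat \<Rightarrow> nat \<Rightarrow> real) \<Rightarrow> (nat \<Rightarrow> (nat \<times> nat \<Rightarrow> real) \<Rightarrow> (nat \<Rightarrow> real))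
     \<Rightarrow> (widx \<Rightarrow> real) \<Rightarrow> (widx \<Rightarrow> real)" where
  "Bbar N M n m etl ehd b g W = (\<lambda>idx. case idx of
       Lam j r \<Rightarrow> if j < N \<and> r < m then b j r else 0
     | Zed l r \<Rightarrow> 0
     | Xe j i k \<Rightarrow> if j < N \<and> i < N \<and> k < n i then
          RT N n (FF N n g (xpart W)) (j, i, k) + (\<Sum>j'<N. Lap M etl ehd j j' * W (Xe j' i k))
        else 0)"

end

theory Submission
  imports Defs
begin

text \<open>Write \<open>Abar W = S W + R\<^sup>T N\<^sub>\<Omega>(R x)\<close>, where \<open>S\<close> is the linear map coupling
  \<open>\<Lambda>\<close>, \<open>z\<close> and \<open>x\<close> through \<open>V\<close> and the \<open>A\<^sub>i\<close>. \<open>S\<close> is skew, so it contributes nothing to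
  monotonicity tests, and monotonicity reduces to that of a normal cone. For maximality, a pair
  \<open>(u, a)\<close> monotonically related to the graph must have \<open>a - S u\<close> supported on the diagonal
  blocks \<open>x\<^sup>(\<^sup>j\<^sup>)\<^sub>j\<close> (a free coordinate elsewhere can be used to violate the test), and the
  diagonal part is then a normal vector by maximality of normal cones of closed convex sets,
  which follows from the variational characterisation of the nearest point.

  \<open>Bbar\<close> is the sum of \<open>R\<^sup>T F\<close>, which is \<open>\<chi>\<close>-cocoercive by Assumption 4, and of
  \<open>L \<otimes> I\<close>, which is \<open>1/(2d\<^sup>*)\<close>-cocoercive: \<open>L = V V\<^sup>T\<close> and every column of \<open>V\<close> has two
  entries \<open>\<plusminus>1\<close>, so Cauchy--Schwarz row by row gives \<open>\<parallel>L y\<parallel>\<^sup>2 \<le> 2 d\<^sup>* \<langle>y, L y\<rangle>\<close>.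
  Finally \<open>\<parallel>p + q\<parallel>\<^sup>2 \<le> 2\<parallel>p\<parallel>\<^sup>2 + 2\<parallel>q\<parallel>\<^sup>2\<close> halves the smaller constant.\<close>

lemma ip_diff_left: "ip I (vsub a b) c = ip I a c - ip I b c"
  by (simp add: ip_def vsub_def sum_subtractf left_diff_distrib)

lemma ip_diff_right: "ip I c (vsub a b) = ip I c a - ip I c b"
  by (simp add: ip_def vsub_def sum_subtractf right_diff_distrib)

lemma ip_add_right: "ip I c (\<lambda>k. a k + b k) = ip I c a + ip I c b"
  by (simp add: ip_def sum.distrib distrib_left)

lemma ip_commute: "ip I a b = ip I b a"
  by (simp add: ip_def mult.commute)

lemma ip_self_nonneg: "0 \<le> ip I a a"
  by (simp add: ip_def sum_nonneg)

lemma ip_self_eq_0D: "finite I \<Longrightarrow> ip I a a = 0 \<Longrightarrow> k \<in> I \<Longrightarrow> a k = 0"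
  unfolding ip_def by (simp add: sum_nonneg_eq_0_iff)

lemma sq_le_ip_self: "finite I \<Longrightarrow> k \<in> I \<Longrightarrow> (a k)\<^sup>2 \<le> ip I a a"
  unfolding ip_def power2_eq_square by (rule member_le_sum) auto

lemma ip_indicator_left:
  assumes "e \<in> I" "finite I"
  shows "ip I (\<lambda>k. if k = e then t else 0) c = t * c e"
proof -
  have "ip I (\<lambda>k. if k = e then t else 0) c = (\<Sum>k\<in>I. if k = e then t * c k else 0)"
    unfolding ip_def by (rule sum.cong) auto
  also have "\<dots> = t * c e" using assms by (simp add: sum.delta')
  finally show ?thesis .
qed

lemma vsub_add: "vsub (\<lambda>k. a k + b k) (\<lambda>k. c k + d k) = (\<lambda>k. vsub a c k + vsub b d k)"
  by (auto simp: vsub_def)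

section \<open>Normal cones of closed convex sets\<close>

lemma closed_space: "closed (space I)"
proof -
  have "space I = (\<Inter>k\<in>-I. {u. u k = 0})" unfolding space_def by auto
  moreover have "closed {u::'a \<Rightarrow> real. u k = 0}" for k
    by (rule closed_Collect_eq) (auto intro: continuous_on_product_coordinates)
  ultimately show ?thesis by auto
qed

lemma compact_PiE_UNIV:
  fixes S :: "'a \<Rightarrow> real set"
  assumes "\<And>k. compact (S k)"
  shows "compact (PiE UNIV S)"
proof -
  have "compactin (product_topology (\<lambda>i. euclidean) UNIV) (PiE UNIV S)"
    using assms by (simp add: compactin_PiE)
  then show ?thesis by (simp add: euclidean_product_topology)
qed

lemma exists_nearest_point:
  fixes C :: "('a \<Rightarrow> real) set"
  assumes fin: "finite I" and CS: "C \<subseteq> space I" and cl: "closed C" and ne: "C \<noteq> {}"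
  shows "\<exists>q\<in>C. \<forall>y\<in>C. ip I (vsub z q) (vsub z q) \<le> ip I (vsub z y) (vsub z y)"
proof -
  define \<phi> where "\<phi> y = ip I (vsub z y) (vsub z y)" for y
  obtain c0 where c0: "c0 \<in> C" using ne by auto
  define r where "r = \<phi> c0"
  define S where "S k = (if k \<in> I then {z k - sqrt r .. z k + sqrt r} else {0::real})" for k
  have coord: "(z k - y k)\<^sup>2 \<le> \<phi> y" if "k \<in> I" for k y
    using sq_le_ip_self[OF fin that, of "vsub z y"] by (simp add: \<phi>_def vsub_def)
  have in_box: "y \<in> PiE UNIV S" if "y \<in> C" "\<phi> y \<le> r" for y
  proof -
    have "y k \<in> S k" for k
    proof (cases "k \<in> I")
      case True
      have "(z k - y k)\<^sup>2 \<le> r" using coord[OF True, of y] that by linarith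
      hence "\<bar>z k - y k\<bar> \<le> sqrt r" using real_sqrt_le_mono by fastforce
      then show ?thesis using True by (auto simp: S_def abs_le_iff)
    next
      case False
      then show ?thesis using that CS by (auto simp: S_def space_def)
    qed
    then show ?thesis by auto
  qed
  have cont: "continuous_on UNIV \<phi>"
    unfolding \<phi>_def ip_def vsub_def by (intro continuous_intros continuous_on_product_coordinates)
  have K: "compact (PiE UNIV S \<inter> C)"
    by (rule compact_Int_closed[OF compact_PiE_UNIV cl]) (auto simp: S_def)
  have K_ne: "PiE UNIV S \<inter> C \<noteq> {}" using in_box[OF c0] c0 by (auto simp: r_def)
  obtain q where q: "q \<in> PiE UNIV S \<inter> C" and q_min: "\<forall>y\<in>PiE UNIV S \<inter> C. \<phi> q \<le> \<phi> y"
    using continuous_attains_inf[OF K K_ne continuous_on_subset[OF cont subset_UNIV]] by blast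
  have "\<phi> q \<le> \<phi> y" if "y \<in> C" for y
  proof (cases "\<phi> y \<le> r")
    case True then show ?thesis using q_min in_box that by auto
  next
    case False
    have "\<phi> q \<le> \<phi> c0" using q_min in_box[OF c0] c0 by (auto simp: r_def)
    then show ?thesis using False by (simp add: r_def)
  qed
  then show ?thesis using q unfolding \<phi>_def by auto
qed

lemma nearest_point_variational_ineq:
  fixes C :: "('a \<Rightarrow> real) set"
  assumes fin: "finite I" and cl: "closed C" and ne: "C \<noteq> {}" and cv: "convex_set I C"
  shows "\<exists>q\<in>C. \<forall>y\<in>C. ip I (vsub z q) (vsub y q) \<le> 0"
proof -
  have CS: "C \<subseteq> space I" using cv by (simp add: convex_set_def)
  obtain q where qC: "q \<in> C"
    and q_min: "\<forall>y\<in>C. ip I (vsub z q) (vsub z q) \<le> ip I (vsub z y) (vsub z y)"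
    using exists_nearest_point[OF fin CS cl ne] by blast
  have "ip I (vsub z q) (vsub y q) \<le> 0" if yC: "y \<in> C" for y
  proof (rule ccontr)
    define a where "a = ip I (vsub z q) (vsub y q)"
    define B where "B = ip I (vsub y q) (vsub y q)"
    assume "\<not> ?thesis"
    hence a_pos: "a > 0" by (simp add: a_def)
    have "B \<ge> 0" by (simp add: B_def ip_self_nonneg)
    define t where "t = (if B \<le> a then 1 else a / B)"
    have t: "0 < t" "t \<le> 1" "t * B \<le> a" using a_pos \<open>B \<ge> 0\<close> by (auto simp: t_def field_simps)
    define yt where "yt = (\<lambda>k. (1 - t) * q k + t * y k)"
    have ytC: "yt \<in> C" using cv qC yC t unfolding convex_set_def yt_def by auto
    have pointwise: "(z k - yt k) * (z k - yt k) = (z k - q k) * (z k - q k)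
        - 2 * t * ((z k - q k) * (y k - q k)) + t\<^sup>2 * ((y k - q k) * (y k - q k))" for k
      unfolding yt_def by (simp add: power2_eq_square algebra_simps)
    have "ip I (vsub z yt) (vsub z yt) = ip I (vsub z q) (vsub z q) - 2 * t * a + t\<^sup>2 * B"
      unfolding ip_def vsub_def a_def B_def
      by (simp only: pointwise sum.distrib sum_subtractf sum_distrib_left[symmetric])
    moreover have "t\<^sup>2 * B \<le> t * a" using t by (simp add: power2_eq_square mult.assoc mult_left_mono)
    moreover have "t * a > 0" using t a_pos by simp
    ultimately have "ip I (vsub z yt) (vsub z yt) < ip I (vsub z q) (vsub z q)" by linarith
    then show False using q_min ytC by fastforce
  qed
  then show ?thesis using qC by blast
qed

lemma normal_cone_monotone:
  assumes "v1 \<in> normal_cone I C p1" "v2 \<in> normal_cone I C p2"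
  shows "0 \<le> ip I (vsub p1 p2) (vsub v1 v2)"
proof -
  have "p1 \<in> C" "p2 \<in> C" using assms by (auto simp: normal_cone_def split: if_splits)
  then have "ip I v1 (vsub p2 p1) \<le> 0" "ip I v2 (vsub p1 p2) \<le> 0"
    using assms by (auto simp: normal_cone_def)
  moreover have "ip I (vsub p1 p2) (vsub v1 v2) = - ip I v1 (vsub p2 p1) - ip I v2 (vsub p1 p2)"
    by (simp add: ip_diff_left ip_diff_right ip_commute)
  ultimately show ?thesis by linarith
qed

text \<open>Testing against the pair \<open>(q, p + w - q)\<close>, with \<open>q\<close> the nearest point to \<open>p + w\<close>,
  yields \<open>\<parallel>p - q\<parallel>\<^sup>2 \<le> 0\<close>.\<close>
lemma normal_cone_maximal:
  fixes C :: "('a \<Rightarrow> real) set"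
  assumes fin: "finite I" and cl: "closed C" and ne: "C \<noteq> {}" and cv: "convex_set I C"
    and p: "p \<in> space I" and w: "w \<in> space I"
    and test: "\<forall>y\<in>C. \<forall>w'\<in>normal_cone I C y. 0 \<le> ip I (vsub p y) (vsub w w')"
  shows "p \<in> C" "w \<in> normal_cone I C p"
proof -
  define z where "z = (\<lambda>k. p k + w k)"
  obtain q where qC: "q \<in> C" and q_var: "\<forall>y\<in>C. ip I (vsub z q) (vsub y q) \<le> 0"
    using nearest_point_variational_ineq[OF fin cl ne cv] by blast
  have qs: "q \<in> space I" using qC cv by (auto simp: convex_set_def)
  have "vsub z q \<in> space I" using p w qs by (auto simp: space_def vsub_def z_def)
  then have nq: "vsub z q \<in> normal_cone I C q"
    unfolding normal_cone_def using qC q_var by (auto simp: ip_commute)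
  have "vsub w (vsub z q) = (\<lambda>k. - vsub p q k)" by (auto simp: vsub_def z_def)
  then have "ip I (vsub p q) (vsub p q) \<le> 0"
    using test qC nq by (force simp: ip_def sum_negf)
  then have "ip I (vsub p q) (vsub p q) = 0" using ip_self_nonneg by (metis order_antisym)
  then have pq_I: "vsub p q k = 0" if "k \<in> I" for k using ip_self_eq_0D[OF fin _ that] by blast
  have pq: "p = q"
  proof
    fix k
    show "p k = q k" using pq_I p qs by (cases "k \<in> I") (auto simp: space_def vsub_def)
  qed
  moreover have "w = vsub z q" using pq by (auto simp: vsub_def z_def)
  ultimately show "p \<in> C" "w \<in> normal_cone I C p" using qC nq by simp_all
qed

section \<open>The graph Laplacian\<close>

lemma Vinc_cases: "Vinc etl ehd j l \<in> {-1, 0, 1}"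
  by (auto simp: Vinc_def)

lemma Vinc_column_sq_sum:
  assumes "etl l < N" "ehd l < N" "etl l \<noteq> ehd l"
  shows "(\<Sum>j<N. (Vinc etl ehd j l)\<^sup>2) = 2"
proof -
  have "(\<Sum>j<N. (Vinc etl ehd j l)\<^sup>2)
      = (\<Sum>j<N. (if j = ehd l then 1 else 0) + (if j = etl l then 1 else 0))"
    by (rule sum.cong) (use assms in \<open>auto simp: Vinc_def\<close>)
  also have "\<dots> = 2" using assms by (simp add: sum.distrib)
  finally show ?thesis .
qed

lemma Lap_mult_eq:
  "(\<Sum>j'<N. Lap M etl ehd j j' * y j')
    = (\<Sum>l<M. Vinc etl ehd j l * (\<Sum>j'<N. Vinc etl ehd j' l * y j'))"
  unfolding Lap_def by (simp add: sum_distrib_left sum_distrib_right mult.assoc) (rule sum.swap)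

lemma Lap_quadratic_form:
  "(\<Sum>j<N. y j * (\<Sum>j'<N. Lap M etl ehd j j' * y j'))
    = (\<Sum>l<M. (\<Sum>j<N. Vinc etl ehd j l * y j)\<^sup>2)"
proof -
  define z where "z l = (\<Sum>j'<N. Vinc etl ehd j' l * y j')" for l
  have "(\<Sum>j<N. y j * (\<Sum>j'<N. Lap M etl ehd j j' * y j'))
      = (\<Sum>j<N. \<Sum>l<M. y j * Vinc etl ehd j l * z l)"
    by (simp add: Lap_mult_eq z_def sum_distrib_left mult.assoc)
  also have "\<dots> = (\<Sum>l<M. \<Sum>j<N. y j * Vinc etl ehd j l * z l)" by (rule sum.swap)
  also have "\<dots> = (\<Sum>l<M. z l * z l)"
    by (simp add: z_def sum_distrib_right mult.commute mult.left_commute)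
  finally show ?thesis by (simp add: z_def power2_eq_square)
qed

text \<open>Cauchy--Schwarz on row \<open>j\<close> of \<open>V\<close>, after writing \<open>V\<^sub>j\<^sub>l = V\<^sub>j\<^sub>l\<^sup>2 \<cdot> V\<^sub>j\<^sub>l\<close>.\<close>
lemma Vinc_row_sq_le:
  "(\<Sum>l<M. Vinc etl ehd j l * z l)\<^sup>2
    \<le> Lap M etl ehd j j * (\<Sum>l<M. (Vinc etl ehd j l)\<^sup>2 * (z l)\<^sup>2)"
proof -
  define V where "V l = Vinc etl ehd j l" for l
  have V_pow: "(V l)\<^sup>2 * (V l * z l) = V l * z l" "((V l)\<^sup>2)\<^sup>2 = (V l)\<^sup>2" for l
    using Vinc_cases[of etl ehd j l] by (auto simp: V_def)
  have "(\<Sum>l<M. V l * z l) = (\<Sum>l<M. (V l)\<^sup>2 * (V l * z l))"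
    by (simp only: V_pow(1))
  also have "(\<dots>)\<^sup>2 \<le> (\<Sum>l<M. ((V l)\<^sup>2)\<^sup>2) * (\<Sum>l<M. (V l * z l)\<^sup>2)"
    by (rule Cauchy_Schwarz_ineq_sum)
  also have "\<dots> = Lap M etl ehd j j * (\<Sum>l<M. (V l)\<^sup>2 * (z l)\<^sup>2)"
    by (simp only: V_pow(2) power_mult_distrib) (simp add: Lap_def V_def power2_eq_square)
  finally show ?thesis by (simp add: V_def)
qed

lemma Lap_sq_le:
  assumes edges: "\<forall>l<M. etl l < N \<and> ehd l < N \<and> etl l \<noteq> ehd l"
    and diag: "\<forall>j<N. Lap M etl ehd j j \<le> d"
  shows "(\<Sum>j<N. (\<Sum>j'<N. Lap M etl ehd j j' * y j')\<^sup>2)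
         \<le> 2 * d * (\<Sum>j<N. y j * (\<Sum>j'<N. Lap M etl ehd j j' * y j'))"
proof -
  define V where "V = Vinc etl ehd"
  define z where "z l = (\<Sum>j'<N. V j' l * y j')" for l
  have "(\<Sum>j<N. (\<Sum>j'<N. Lap M etl ehd j j' * y j')\<^sup>2)
      \<le> (\<Sum>j<N. d * (\<Sum>l<M. (V j l)\<^sup>2 * (z l)\<^sup>2))"
  proof (rule sum_mono)
    fix j assume "j \<in> {..<N}"
    have "(\<Sum>j'<N. Lap M etl ehd j j' * y j')\<^sup>2
        \<le> Lap M etl ehd j j * (\<Sum>l<M. (V j l)\<^sup>2 * (z l)\<^sup>2)"
      unfolding Lap_mult_eq V_def z_def by (rule Vinc_row_sq_le)
    also have "\<dots> \<le> d * (\<Sum>l<M. (V j l)\<^sup>2 * (z l)\<^sup>2)"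
      using diag \<open>j \<in> {..<N}\<close> by (intro mult_right_mono sum_nonneg) auto
    finally show "(\<Sum>j'<N. Lap M etl ehd j j' * y j')\<^sup>2 \<le> d * (\<Sum>l<M. (V j l)\<^sup>2 * (z l)\<^sup>2)" .
  qed
  also have "\<dots> = d * (\<Sum>l<M. (z l)\<^sup>2 * (\<Sum>j<N. (V j l)\<^sup>2))"
    by (simp add: sum_distrib_left sum_distrib_right mult_ac) (rule sum.swap)
  also have "\<dots> = 2 * d * (\<Sum>l<M. (z l)\<^sup>2)"
    using Vinc_column_sq_sum edges by (simp add: V_def sum_distrib_left mult_ac)
  also have "\<dots> = 2 * d * (\<Sum>j<N. y j * (\<Sum>j'<N. Lap M etl ehd j j' * y j'))"
    by (simp only: Lap_quadratic_form V_def z_def)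
  finally show ?thesis .
qed

lemma Lap_diag_le_dstar: "j < N \<Longrightarrow> Lap M etl ehd j j \<le> dstar N M etl ehd"
  unfolding dstar_def by (rule Max_ge) auto

lemma dstar_nonneg:
  assumes "1 \<le> N"
  shows "0 \<le> dstar N M etl ehd"
proof -
  have "0 \<le> Lap M etl ehd 0 0" unfolding Lap_def by (intro sum_nonneg) simp
  also have "\<dots> \<le> dstar N M etl ehd" using assms by (intro Lap_diag_le_dstar) simp
  finally show ?thesis .
qed

lemma PI_eq_Sigma: "PI N n = Sigma {..<N} (\<lambda>i. {..<n i})"
  by (auto simp: PI_def)

lemma XI_eq_Sigma: "XI N n = Sigma {..<N} (\<lambda>j. Sigma {..<N} (\<lambda>i. {..<n i}))"
  by (auto simp: XI_def)

lemma finite_PI: "finite (PI N n)"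
  by (simp add: PI_eq_Sigma)

lemma finite_XI: "finite (XI N n)"
  by (simp add: XI_eq_Sigma)

lemma sum_PI: "sum h (PI N n) = (\<Sum>i<N. \<Sum>k<n i. h (i, k))"
  by (simp add: PI_eq_Sigma sum.Sigma)

lemma sum_XI: "sum h (XI N n) = (\<Sum>j<N. \<Sum>i<N. \<Sum>k<n i. h (j, i, k))"
  by (simp add: XI_eq_Sigma sum.Sigma)

lemma sum_estimator_index_innermost:
  "(\<Sum>j<N. \<Sum>i<N. \<Sum>k<n i. F j i k) = (\<Sum>i<N. \<Sum>k<(n i::nat). \<Sum>j<(N::nat). F j i k)"
proof -
  have "(\<Sum>j<N. \<Sum>i<N. \<Sum>k<n i. F j i k) = (\<Sum>i<N. \<Sum>j<N. \<Sum>k<n i. F j i k)"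
    by (rule sum.swap)
  also have "\<dots> = (\<Sum>i<N. \<Sum>k<n i. \<Sum>j<N. F j i k)"
    by (rule sum.cong[OF refl], rule sum.swap)
  finally show ?thesis .
qed

lemma WI_eq:
  "WI N M n m = (\<lambda>(j, r). Lam j r) ` ({..<N} \<times> {..<m}) \<union> (\<lambda>(l, r). Zed l r) ` ({..<M} \<times> {..<m})
    \<union> (\<lambda>(j, i, k). Xe j i k) ` XI N n"
  by (auto simp: WI_def XI_def image_iff)

lemma finite_WI: "finite (WI N M n m)"
  by (simp add: WI_eq finite_XI)

lemma sum_WI:
  "sum h (WI N M n m) = (\<Sum>j<N. \<Sum>r<m. h (Lam j r)) + (\<Sum>l<M. \<Sum>r<m. h (Zed l r))
    + (\<Sum>j<N. \<Sum>i<N. \<Sum>k<n i. h (Xe j i k))"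
proof -
  have inj: "inj_on (\<lambda>(j, r). Lam j r) X" "inj_on (\<lambda>(l, r). Zed l r) Y"
    "inj_on (\<lambda>(j, i, k). Xe j i k) Z" for X Y Z
    by (auto simp: inj_on_def)
  have "sum h (WI N M n m)
      = sum h ((\<lambda>(j, r). Lam j r) ` ({..<N} \<times> {..<m})) + sum h ((\<lambda>(l, r). Zed l r) ` ({..<M} \<times> {..<m}))
        + sum h ((\<lambda>(j, i, k). Xe j i k) ` XI N n)"
    unfolding WI_eq by (subst sum.union_disjoint, auto simp: finite_XI)+
  also have "sum h ((\<lambda>(j, r). Lam j r) ` ({..<N} \<times> {..<m})) = (\<Sum>j<N. \<Sum>r<m. h (Lam j r))"
    by (subst sum.reindex[OF inj(1)]) (simp add: sum.cartesian_product comp_def case_prod_unfold)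
  also have "sum h ((\<lambda>(l, r). Zed l r) ` ({..<M} \<times> {..<m})) = (\<Sum>l<M. \<Sum>r<m. h (Zed l r))"
    by (subst sum.reindex[OF inj(2)]) (simp add: sum.cartesian_product comp_def case_prod_unfold)
  also have "sum h ((\<lambda>(j, i, k). Xe j i k) ` XI N n) = (\<Sum>j<N. \<Sum>i<N. \<Sum>k<n i. h (Xe j i k))"
    by (subst sum.reindex[OF inj(3)]) (simp add: sum_XI comp_def case_prod_unfold)
  finally show ?thesis .
qed

lemma sum_single_block:
  fixes n :: "nat \<Rightarrow> nat"
  assumes "j < N" "\<And>i k. i \<noteq> j \<Longrightarrow> G i k = 0"
  shows "(\<Sum>i<N. \<Sum>k<n i. G i k) = (\<Sum>k<n j. G j k)"
  using assms by (subst sum.remove[of _ j]) auto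

section \<open>The operator \<open>Abar\<close>\<close>

definition Abar_linear :: "nat \<Rightarrow> nat \<Rightarrow> (nat \<Rightarrow> nat) \<Rightarrow> nat \<Rightarrow> (nat \<Rightarrow> nat) \<Rightarrow> (nat \<Rightarrow> nat)
    \<Rightarrow> (nat \<Rightarrow> nat \<Rightarrow> nat \<Rightarrow> real) \<Rightarrow> (widx \<Rightarrow> real) \<Rightarrow> (widx \<Rightarrow> real)" where
  "Abar_linear N M n m etl ehd A W = (\<lambda>idx. case idx of
      Lam j r \<Rightarrow> if j < N \<and> r < m then
           - (\<Sum>l<M. Vinc etl ehd j l * W (Zed l r)) - (\<Sum>k<n j. A j r k * W (Xe j j k)) else 0
    | Zed l r \<Rightarrow> if l < M \<and> r < m then (\<Sum>j<N. Vinc etl ehd j l * W (Lam j r)) else 0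
    | Xe j i k \<Rightarrow> if j < N \<and> i = j \<and> k < n j then (\<Sum>r<m. A j r k * W (Lam j r)) else 0)"

text \<open>\<open>R\<^sup>T\<close>, placed in the \<open>x\<close>-component of \<open>W\<close>.\<close>
definition lift_diag :: "nat \<Rightarrow> (nat \<Rightarrow> nat) \<Rightarrow> (nat \<times> nat \<Rightarrow> real) \<Rightarrow> widx \<Rightarrow> real" where
  "lift_diag N n v = (\<lambda>idx. case idx of
      Xe j i k \<Rightarrow> if j < N \<and> i = j \<and> k < n j then v (j, k) else 0
    | _ \<Rightarrow> 0)"

lemma Abar_eq:
  "Abar N M n m etl ehd \<Omega> A W =
    {W'. \<exists>v\<in>normal_cone (PI N n) (OmegaP N n \<Omega>) (Rx N n W).
       W' = (\<lambda>idx. Abar_linear N M n m etl ehd A W idx + lift_diag N n v idx)}"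
proof -
  have "(\<lambda>idx. case idx of
            Lam j r \<Rightarrow> if j < N \<and> r < m then
                 - (\<Sum>l<M. Vinc etl ehd j l * W (Zed l r)) - (\<Sum>k<n j. A j r k * W (Xe j j k))
               else 0
          | Zed l r \<Rightarrow> if l < M \<and> r < m then (\<Sum>j<N. Vinc etl ehd j l * W (Lam j r)) else 0
          | Xe j i k \<Rightarrow> if j < N \<and> i = j \<and> k < n j then
                 v (j, k) + (\<Sum>r<m. A j r k * W (Lam j r))
               else 0)
      = (\<lambda>idx. Abar_linear N M n m etl ehd A W idx + lift_diag N n v idx)" for v
    by (rule ext, case_tac idx) (auto simp: Abar_linear_def lift_diag_def)
  then show ?thesis unfolding Abar_def by simp
qed

lemma Abar_linear_diff:
  "Abar_linear N M n m etl ehd A (vsub u v)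
    = vsub (Abar_linear N M n m etl ehd A u) (Abar_linear N M n m etl ehd A v)"
  by (rule ext, case_tac x) (auto simp: Abar_linear_def vsub_def sum_subtractf right_diff_distrib)

lemma lift_diag_diff: "vsub (lift_diag N n v1) (lift_diag N n v2) = lift_diag N n (vsub v1 v2)"
  by (rule ext, case_tac x) (auto simp: lift_diag_def vsub_def)

lemma Rx_diff: "Rx N n (vsub u v) = vsub (Rx N n u) (Rx N n v)"
  by (auto simp: Rx_def vsub_def fun_eq_iff)

lemma Abar_linear_in_space: "Abar_linear N M n m etl ehd A W \<in> space (WI N M n m)"
  by (auto simp: space_def Abar_linear_def WI_def split: widx.splits)

lemma lift_diag_in_space: "lift_diag N n v \<in> space (WI N M n m)"
  by (auto simp: space_def lift_diag_def WI_def split: widx.splits)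

lemma Rx_in_space: "Rx N n W \<in> space (PI N n)"
  by (auto simp: space_def Rx_def PI_def)

lemma Rx_lift_diag: "y \<in> space (PI N n) \<Longrightarrow> Rx N n (lift_diag N n y) = y"
  by (auto simp: lift_diag_def space_def Rx_def PI_def fun_eq_iff)

lemma ip_lift_diag: "ip (WI N M n m) d (lift_diag N n v) = ip (PI N n) (Rx N n d) v"
proof -
  have "ip (WI N M n m) d (lift_diag N n v)
      = (\<Sum>j<N. \<Sum>i<N. \<Sum>k<n i. d (Xe j i k) * (if i = j then v (j, k) else 0))"
    unfolding ip_def sum_WI by (simp add: lift_diag_def) (intro sum.cong refl, auto)
  also have "\<dots> = (\<Sum>j<N. \<Sum>k<n j. d (Xe j j k) * v (j, k))"
    by (rule sum.cong[OF refl], subst sum_single_block) auto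
  also have "\<dots> = ip (PI N n) (Rx N n d) v"
    unfolding ip_def sum_PI by (simp add: Rx_def)
  finally show ?thesis .
qed

lemma Abar_linear_skew: "ip (WI N M n m) d (Abar_linear N M n m etl ehd A d) = 0"
proof -
  define S where "S = Abar_linear N M n m etl ehd A d"
  define V where "V = Vinc etl ehd"
  have Lam_part: "(\<Sum>j<N. \<Sum>r<m. d (Lam j r) * S (Lam j r))
      = - (\<Sum>l<M. \<Sum>r<m. \<Sum>j<N. d (Zed l r) * V j l * d (Lam j r))
        - (\<Sum>j<N. \<Sum>k<n j. \<Sum>r<m. d (Xe j j k) * A j r k * d (Lam j r))"
  proof -
    have "(\<Sum>j<N. \<Sum>r<m. d (Lam j r) * S (Lam j r))
        = - (\<Sum>j<N. \<Sum>r<m. \<Sum>l<M. d (Lam j r) * V j l * d (Zed l r))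
          - (\<Sum>j<N. \<Sum>r<m. \<Sum>k<n j. d (Lam j r) * A j r k * d (Xe j j k))"
      by (simp add: S_def Abar_linear_def V_def sum_distrib_left right_diff_distrib sum_subtractf
          sum_negf mult.assoc flip: sum.distrib)
    also have "(\<Sum>j<N. \<Sum>r<m. \<Sum>l<M. d (Lam j r) * V j l * d (Zed l r))
        = (\<Sum>l<M. \<Sum>r<m. \<Sum>j<N. d (Zed l r) * V j l * d (Lam j r))"
      by (subst sum.swap, subst (2) sum.swap, subst sum.swap[of _ "{..<M}"])
         (simp add: sum.swap[of _ "{..<N}"] mult_ac)
    also have "(\<Sum>j<N. \<Sum>r<m. \<Sum>k<n j. d (Lam j r) * A j r k * d (Xe j j k))
        = (\<Sum>j<N. \<Sum>k<n j. \<Sum>r<m. d (Xe j j k) * A j r k * d (Lam j r))"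
      by (rule sum.cong[OF refl], subst sum.swap) (simp add: mult_ac)
    finally show ?thesis .
  qed
  have Zed_part: "(\<Sum>l<M. \<Sum>r<m. d (Zed l r) * S (Zed l r))
      = (\<Sum>l<M. \<Sum>r<m. \<Sum>j<N. d (Zed l r) * V j l * d (Lam j r))"
    by (simp add: S_def Abar_linear_def V_def sum_distrib_left mult.assoc)
  have Xe_part: "(\<Sum>j<N. \<Sum>i<N. \<Sum>k<n i. d (Xe j i k) * S (Xe j i k))
      = (\<Sum>j<N. \<Sum>k<n j. \<Sum>r<m. d (Xe j j k) * A j r k * d (Lam j r))"
    by (rule sum.cong[OF refl], subst sum_single_block)
       (auto simp: S_def Abar_linear_def sum_distrib_left mult.assoc)
  show ?thesis
    unfolding ip_def sum_WI S_def[symmetric] Lam_part Zed_part Xe_part by simp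
qed

lemma Abar_in_space: "Abar N M n m etl ehd \<Omega> A u \<subseteq> space (WI N M n m)"
  using Abar_linear_in_space lift_diag_in_space by (fastforce simp: Abar_eq space_def)

lemma OmegaP_subset_space: "OmegaP N n \<Omega> \<subseteq> space (PI N n)"
  by (auto simp: OmegaP_def)

lemma closed_OmegaP:
  assumes "\<forall>i<N. closed (\<Omega> i)"
  shows "closed (OmegaP N n \<Omega>)"
proof -
  have "continuous_on UNIV (blk i)" for i
    unfolding blk_def
    by (intro continuous_on_coordinatewise_then_product continuous_on_product_coordinates)
  then have "closed (blk i -` \<Omega> i)" if "i < N" for i
    using assms that continuous_on_closed_vimage[of UNIV "blk i"] by auto
  then have "closed (space (PI N n) \<inter> (\<Inter>i\<in>{..<N}. blk i -` \<Omega> i))"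
    by (intro closed_Int closed_space closed_INT) auto
  moreover have "OmegaP N n \<Omega> = space (PI N n) \<inter> (\<Inter>i\<in>{..<N}. blk i -` \<Omega> i)"
    by (auto simp: OmegaP_def)
  ultimately show ?thesis by simp
qed

lemma convex_OmegaP:
  assumes "\<forall>i<N. convex_set {..<n i} (\<Omega> i)"
  shows "convex_set (PI N n) (OmegaP N n \<Omega>)"
  unfolding convex_set_def
proof (intro conjI OmegaP_subset_space ballI allI impI)
  fix x y and t :: real assume x: "x \<in> OmegaP N n \<Omega>" and y: "y \<in> OmegaP N n \<Omega>" and t: "0 \<le> t \<and> t \<le> 1"
  have "blk i (\<lambda>k. (1 - t) * x k + t * y k) \<in> \<Omega> i" if "i < N" for i
    using assms x y t that unfolding convex_set_def OmegaP_def by (auto simp: blk_def)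
  moreover have "(\<lambda>k. (1 - t) * x k + t * y k) \<in> space (PI N n)"
    using x y by (auto simp: OmegaP_def space_def)
  ultimately show "(\<lambda>k. (1 - t) * x k + t * y k) \<in> OmegaP N n \<Omega>" by (simp add: OmegaP_def)
qed

lemma OmegaP_nonempty:
  assumes "nonempty_rel_interior (Xset N n m \<Omega> A b)"
  shows "OmegaP N n \<Omega> \<noteq> {}"
  using assms by (auto simp: nonempty_rel_interior_def Xset_def)

lemma Abar_monotone: "monotone_op (WI N M n m) (Abar N M n m etl ehd \<Omega> A)"
  unfolding monotone_op_def
proof (intro ballI)
  fix u v a a'
  assume "a \<in> Abar N M n m etl ehd \<Omega> A u" "a' \<in> Abar N M n m etl ehd \<Omega> A v"
  then obtain v1 v2 where v1: "v1 \<in> normal_cone (PI N n) (OmegaP N n \<Omega>) (Rx N n u)"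
    and v2: "v2 \<in> normal_cone (PI N n) (OmegaP N n \<Omega>) (Rx N n v)"
    and a: "a = (\<lambda>idx. Abar_linear N M n m etl ehd A u idx + lift_diag N n v1 idx)"
    and a': "a' = (\<lambda>idx. Abar_linear N M n m etl ehd A v idx + lift_diag N n v2 idx)"
    unfolding Abar_eq by blast
  have "ip (WI N M n m) (vsub u v) (vsub a a')
      = ip (WI N M n m) (vsub u v) (Abar_linear N M n m etl ehd A (vsub u v))
        + ip (WI N M n m) (vsub u v) (lift_diag N n (vsub v1 v2))"
    unfolding a a' vsub_add ip_add_right Abar_linear_diff lift_diag_diff ..
  also have "\<dots> = ip (PI N n) (vsub (Rx N n u) (Rx N n v)) (vsub v1 v2)"
    by (simp add: Abar_linear_skew ip_lift_diag Rx_diff)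
  also have "\<dots> \<ge> 0" by (rule normal_cone_monotone[OF v1 v2])
  finally show "0 \<le> ip (WI N M n m) (vsub u v) (vsub a a')" .
qed

lemma Abar_test_reduced:
  assumes v: "v \<in> space (WI N M n m)"
    and w: "w \<in> normal_cone (PI N n) (OmegaP N n \<Omega>) (Rx N n v)"
    and test: "\<forall>v\<in>space (WI N M n m). \<forall>a'\<in>Abar N M n m etl ehd \<Omega> A v.
                 0 \<le> ip (WI N M n m) (vsub u v) (vsub a a')"
  shows "ip (PI N n) (vsub (Rx N n u) (Rx N n v)) w
         \<le> ip (WI N M n m) (vsub u v) (vsub a (Abar_linear N M n m etl ehd A u))"
proof -
  define S where "S = Abar_linear N M n m etl ehd A"
  have "(\<lambda>idx. S v idx + lift_diag N n w idx) \<in> Abar N M n m etl ehd \<Omega> A v"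
    unfolding Abar_eq S_def using w by blast
  then have "0 \<le> ip (WI N M n m) (vsub u v) (vsub a (\<lambda>idx. S v idx + lift_diag N n w idx))"
    using test v by blast
  also have "\<dots> = ip (WI N M n m) (vsub u v) (vsub a (S u))
      + ip (WI N M n m) (vsub u v) (vsub (S u) (S v))
      - ip (WI N M n m) (vsub u v) (lift_diag N n w)"
    by (simp add: ip_diff_right ip_add_right)
  also have "ip (WI N M n m) (vsub u v) (vsub (S u) (S v)) = 0"
    unfolding S_def Abar_linear_diff[symmetric] by (rule Abar_linear_skew)
  finally show ?thesis by (simp add: S_def ip_lift_diag Rx_diff)
qed

text \<open>If \<open>c e \<noteq> 0\<close>, take \<open>v\<close> with \<open>R v = p\<^sub>0 \<in> C\<close> and normal vector \<open>0\<close>, and move \<open>v\<close>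
  along the off-diagonal coordinate \<open>e\<close>: this leaves \<open>R v\<close> unchanged but makes
  \<open>\<langle>u - v, c\<rangle>\<close> negative.\<close>
lemma residual_off_diag_eq_0:
  assumes p0: "p0 \<in> C" "p0 \<in> space (PI N n)" and u: "u \<in> space (WI N M n m)"
    and test: "\<And>v w. v \<in> space (WI N M n m) \<Longrightarrow> w \<in> normal_cone (PI N n) C (Rx N n v) \<Longrightarrow>
                  ip (PI N n) (vsub (Rx N n u) (Rx N n v)) w \<le> ip (WI N M n m) (vsub u v) c"
    and e: "e \<in> WI N M n m" "\<forall>j k. e \<noteq> Xe j j k"
  shows "c e = 0"
proof (rule ccontr)
  define WW where "WW = WI N M n m"
  assume ce: "c e \<noteq> 0"
  define vb where "vb = (\<lambda>idx. case idx of
      Xe j i k \<Rightarrow> if i = j then p0 (j, k) else u idx | _ \<Rightarrow> u idx)"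
  define t where "t = (ip WW (vsub u vb) c + 1) / c e"
  define vt where "vt = (\<lambda>idx. vb idx + (if idx = e then t else 0))"
  have "vt \<in> space WW"
    using e u p0 unfolding vt_def vb_def space_def
    by (auto simp: WW_def WI_def PI_def split: widx.splits)
  moreover have "Rx N n vt = p0"
    using e p0 unfolding vt_def vb_def by (auto simp: Rx_def space_def PI_def fun_eq_iff)
  moreover have "(\<lambda>_. 0) \<in> normal_cone (PI N n) C p0"
    using p0 by (simp add: normal_cone_def space_def ip_def)
  ultimately have "0 \<le> ip WW (vsub u vt) c"
    using test[of vt "\<lambda>_. 0"] by (simp add: WW_def ip_def)
  moreover have "vsub u vt = vsub (vsub u vb) (\<lambda>idx. if idx = e then t else 0)"
    by (auto simp: vsub_def vt_def)
  ultimately have "0 \<le> ip WW (vsub u vb) c - t * c e"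
    using e finite_WI by (simp add: ip_diff_left ip_indicator_left WW_def)
  then show False using ce by (simp add: t_def)
qed

lemma residual_eq_lift_diag:
  assumes p0: "p0 \<in> C" "p0 \<in> space (PI N n)"
    and u: "u \<in> space (WI N M n m)" and c: "c \<in> space (WI N M n m)"
    and test: "\<And>v w. v \<in> space (WI N M n m) \<Longrightarrow> w \<in> normal_cone (PI N n) C (Rx N n v) \<Longrightarrow>
                  ip (PI N n) (vsub (Rx N n u) (Rx N n v)) w \<le> ip (WI N M n m) (vsub u v) c"
  shows "c = lift_diag N n (\<lambda>(j, k). if (j, k) \<in> PI N n then c (Xe j j k) else 0)"
proof (rule ext)
  fix idx
  show "c idx = lift_diag N n (\<lambda>(j, k). if (j, k) \<in> PI N n then c (Xe j j k) else 0) idx"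
  proof (cases "idx \<in> WI N M n m")
    case False
    then show ?thesis using c by (auto simp: space_def lift_diag_def WI_def split: widx.splits)
  next
    case True
    then show ?thesis using residual_off_diag_eq_0[OF p0 u test True]
      by (cases idx) (auto simp: lift_diag_def WI_def PI_def)
  qed
qed

lemma Abar_maximal:
  assumes \<Omega>: "\<forall>i<N. closed (\<Omega> i) \<and> convex_set {..<n i} (\<Omega> i)" and ne: "OmegaP N n \<Omega> \<noteq> {}"
    and u: "u \<in> space (WI N M n m)" and a: "a \<in> space (WI N M n m)"
    and test: "\<forall>v\<in>space (WI N M n m). \<forall>a'\<in>Abar N M n m etl ehd \<Omega> A v.
                 0 \<le> ip (WI N M n m) (vsub u v) (vsub a a')"
  shows "a \<in> Abar N M n m etl ehd \<Omega> A u"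
proof -
  define C where "C = OmegaP N n \<Omega>"
  define S where "S = Abar_linear N M n m etl ehd A"
  define c where "c = vsub a (S u)"
  define w where "w = (\<lambda>(j, k). if (j, k) \<in> PI N n then c (Xe j j k) else 0)"
  note reduced = Abar_test_reduced[OF _ _ test, folded C_def S_def c_def]
  obtain p0 where p0: "p0 \<in> C" using ne by (auto simp: C_def)
  have "p0 \<in> space (PI N n)" using p0 OmegaP_subset_space by (auto simp: C_def)
  moreover have "c \<in> space (WI N M n m)"
    using a Abar_linear_in_space unfolding c_def S_def space_def vsub_def by auto
  ultimately have c_eq: "c = lift_diag N n w"
    unfolding w_def by (rule residual_eq_lift_diag[OF p0 _ u _ reduced])
  have "0 \<le> ip (PI N n) (vsub (Rx N n u) y) (vsub w w')"
    if y: "y \<in> C" and w': "w' \<in> normal_cone (PI N n) C y" for y w'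
  proof -
    have ys: "y \<in> space (PI N n)" using y OmegaP_subset_space by (auto simp: C_def)
    have "w' \<in> normal_cone (PI N n) C (Rx N n (lift_diag N n y))"
      using w' by (simp add: Rx_lift_diag[OF ys])
    from reduced[OF lift_diag_in_space this]
    have "ip (PI N n) (vsub (Rx N n u) y) w' \<le> ip (WI N M n m) (vsub u (lift_diag N n y)) c"
      by (simp add: Rx_lift_diag[OF ys])
    also have "\<dots> = ip (PI N n) (vsub (Rx N n u) y) w"
      unfolding c_eq by (simp add: ip_lift_diag Rx_diff Rx_lift_diag[OF ys])
    finally show ?thesis by (simp add: ip_diff_right)
  qed
  then have "w \<in> normal_cone (PI N n) C (Rx N n u)"
    using normal_cone_maximal(2)[OF finite_PI _ _ _ Rx_in_space] \<Omega> ne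
    by (auto simp: C_def w_def space_def closed_OmegaP convex_OmegaP)
  moreover have "a = (\<lambda>idx. S u idx + lift_diag N n w idx)"
  proof (rule ext)
    fix idx
    have "a idx - S u idx = lift_diag N n w idx"
      using fun_cong[OF c_eq, of idx] unfolding c_def vsub_def by simp
    then show "a idx = S u idx + lift_diag N n w idx" by linarith
  qed
  ultimately show ?thesis unfolding Abar_eq S_def C_def by blast
qed

lemma Abar_maximally_monotone:
  assumes \<Omega>: "\<forall>i<N. closed (\<Omega> i) \<and> convex_set {..<n i} (\<Omega> i)" and ne: "OmegaP N n \<Omega> \<noteq> {}"
  shows "maximally_monotone (WI N M n m) (Abar N M n m etl ehd \<Omega> A)"
  unfolding maximally_monotone_def
proof (intro conjI ballI impI Abar_in_space Abar_monotone)
  fix u a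
  assume "u \<in> space (WI N M n m)" "a \<in> space (WI N M n m)"
    "\<forall>v\<in>space (WI N M n m). \<forall>a'\<in>Abar N M n m etl ehd \<Omega> A v.
       0 \<le> ip (WI N M n m) (vsub u v) (vsub a a')"
  then show "a \<in> Abar N M n m etl ehd \<Omega> A u" by (rule Abar_maximal[OF \<Omega> ne])
qed

section \<open>The operator \<open>Bbar\<close>\<close>

lemma Lap_blocks_sq_le:
  fixes n :: "nat \<Rightarrow> nat"
  assumes edges: "\<forall>l<M. etl l < N \<and> ehd l < N \<and> etl l \<noteq> ehd l"
    and diag: "\<forall>j<N. Lap M etl ehd j j \<le> d"
  shows "(\<Sum>j<N. \<Sum>i<N. \<Sum>k<n i. (\<Sum>j'<N. Lap M etl ehd j j' * y (j', i, k))\<^sup>2)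
      \<le> 2 * d * (\<Sum>j<N. \<Sum>i<N. \<Sum>k<n i. y (j, i, k) * (\<Sum>j'<N. Lap M etl ehd j j' * y (j', i, k)))"
proof -
  have "(\<Sum>j<N. \<Sum>i<N. \<Sum>k<n i. (\<Sum>j'<N. Lap M etl ehd j j' * y (j', i, k))\<^sup>2)
      = (\<Sum>i<N. \<Sum>k<n i. \<Sum>j<N. (\<Sum>j'<N. Lap M etl ehd j j' * y (j', i, k))\<^sup>2)"
    by (rule sum_estimator_index_innermost)
  also have "\<dots> \<le> (\<Sum>i<N. \<Sum>k<n i. 2 * d * (\<Sum>j<N. y (j, i, k) * (\<Sum>j'<N. Lap M etl ehd j j' * y (j', i, k))))"
    by (intro sum_mono Lap_sq_le[OF edges diag])
  also have "\<dots> = 2 * d * (\<Sum>j<N. \<Sum>i<N. \<Sum>k<n i. y (j, i, k) * (\<Sum>j'<N. Lap M etl ehd j j' * y (j', i, k)))"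
    by (subst sum_estimator_index_innermost) (simp add: sum_distrib_left)
  finally show ?thesis .
qed

lemma Lap_blocks_form_nonneg:
  fixes n :: "nat \<Rightarrow> nat"
  shows "0 \<le> (\<Sum>j<N. \<Sum>i<N. \<Sum>k<n i. y (j, i, k) * (\<Sum>j'<N. Lap M etl ehd j j' * y (j', i, k)))"
proof -
  have form: "0 \<le> (\<Sum>j<N. x j * (\<Sum>j'<N. Lap M etl ehd j j' * x j'))" for x :: "nat \<Rightarrow> real"
    by (simp add: Lap_quadratic_form sum_nonneg)
  show ?thesis
    by (subst sum_estimator_index_innermost) (rule sum_nonneg, rule sum_nonneg, rule form)
qed

lemma cocoercive_sum_ineq:
  fixes \<beta> chi d a2 b2 s t1 t2 :: real
  assumes "chi * a2 \<le> t1" "b2 \<le> d * t2" "0 \<le> a2" "0 \<le> t2" "0 \<le> \<beta>"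
    and "2 * \<beta> \<le> chi" "2 * \<beta> * d \<le> 1" "s \<le> 2 * a2 + 2 * b2"
  shows "\<beta> * s \<le> t1 + t2"
proof -
  have "\<beta> * s \<le> 2 * \<beta> * a2 + 2 * \<beta> * b2"
    using mult_left_mono[OF assms(8,5)] by (simp add: algebra_simps)
  also have "2 * \<beta> * a2 \<le> chi * a2" using assms(6,3) by (rule mult_right_mono)
  also have "2 * \<beta> * b2 \<le> 2 * \<beta> * d * t2"
    using mult_left_mono[OF assms(2), of "2 * \<beta>"] assms(5) by (simp add: mult.assoc)
  also have "\<dots> \<le> t2" using mult_right_mono[OF assms(7,4)] by simp
  finally show ?thesis using assms(1) by simp
qed

lemma cocoercivity_constant_bounds:
  fixes ds \<beta> chi :: real
  assumes ds: "0 \<le> ds" and \<beta>: "\<beta> < (if ds = 0 then chi / 2 else min chi (1 / (2 * ds)) / 2)"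
  shows "2 * \<beta> \<le> chi \<and> 2 * \<beta> * (2 * ds) \<le> 1"
proof (cases "ds = 0")
  case True
  then show ?thesis using \<beta> by simp
next
  case False
  then have "2 * \<beta> < chi" "2 * \<beta> < 1 / (2 * ds)"
    using \<beta> min.cobounded1[of chi "1 / (2 * ds)"] min.cobounded2[of chi "1 / (2 * ds)"] by simp_all
  moreover have "0 < ds" using ds False by simp
  ultimately show ?thesis by (simp add: pos_less_divide_eq)
qed

lemma RT_diff: "vsub (RT N n v) (RT N n w) = RT N n (vsub v w)"
  by (auto simp: RT_def vsub_def fun_eq_iff)

lemma sum_sq_RT: "(\<Sum>j<N. \<Sum>i<N. \<Sum>k<n i. (RT N n v (j, i, k))\<^sup>2) = ip (PI N n) v v"
proof -
  have "(\<Sum>j<N. \<Sum>i<N. \<Sum>k<n i. (RT N n v (j, i, k))\<^sup>2) = (\<Sum>j<N. \<Sum>k<n j. (RT N n v (j, j, k))\<^sup>2)"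
    by (rule sum.cong[OF refl], rule sum_single_block) (auto simp: RT_def)
  then show ?thesis by (simp add: ip_def sum_PI RT_def power2_eq_square)
qed

lemma xpart_in_space: "W \<in> space (WI N M n m) \<Longrightarrow> xpart W \<in> space (XI N n)"
  by (auto simp: space_def xpart_def XI_def WI_def)

lemma Bbar_diff_Xe:
  assumes "j < N" "i < N" "k < n i"
  shows "vsub (Bbar N M n m etl ehd b g u) (Bbar N M n m etl ehd b g v) (Xe j i k)
    = RT N n (vsub (FF N n g (xpart u)) (FF N n g (xpart v))) (j, i, k)
      + (\<Sum>j'<N. Lap M etl ehd j j' * vsub (xpart u) (xpart v) (j', i, k))"
  using assms
  by (simp add: Bbar_def flip: RT_diff) (simp add: vsub_def xpart_def sum_subtractf right_diff_distrib)

lemma Bbar_diff_Lam_Zed: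
  "vsub (Bbar N M n m etl ehd b g u) (Bbar N M n m etl ehd b g v) (Lam j r) = 0"
  "vsub (Bbar N M n m etl ehd b g u) (Bbar N M n m etl ehd b g v) (Zed l r) = 0"
  by (simp_all add: Bbar_def vsub_def)

lemma Bbar_cocoercive:
  assumes N: "1 \<le> N" and edges: "\<forall>l<M. etl l < N \<and> ehd l < N \<and> etl l \<noteq> ehd l"
    and a4: "assumption4 N n g chi" and \<beta>: "0 < \<beta>"
    "\<beta> < (if dstar N M etl ehd = 0 then chi / 2 else min chi (1 / (2 * dstar N M etl ehd)) / 2)"
  shows "cocoercive (WI N M n m) (Bbar N M n m etl ehd b g) \<beta>"
  unfolding cocoercive_def
proof (intro ballI)
  fix u v assume u: "u \<in> space (WI N M n m)" and v: "v \<in> space (WI N M n m)"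
  define dB where "dB = vsub (Bbar N M n m etl ehd b g u) (Bbar N M n m etl ehd b g v)"
  define dx where "dx = vsub (xpart u) (xpart v)"
  define dF where "dF = vsub (FF N n g (xpart u)) (FF N n g (xpart v))"
  define lx where "lx = (\<lambda>(j, i, k). \<Sum>j'<N. Lap M etl ehd j j' * dx (j', i, k))"
  define T1 where "T1 = (\<Sum>j<N. \<Sum>i<N. \<Sum>k<n i. dx (j, i, k) * RT N n dF (j, i, k))"
  define T2 where "T2 = (\<Sum>j<N. \<Sum>i<N. \<Sum>k<n i. dx (j, i, k) * lx (j, i, k))"
  define B2 where "B2 = (\<Sum>j<N. \<Sum>i<N. \<Sum>k<n i. (lx (j, i, k))\<^sup>2)"
  have dB_Xe: "dB (Xe j i k) = RT N n dF (j, i, k) + lx (j, i, k)" if "j < N" "i < N" "k < n i" for j i k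
    using Bbar_diff_Xe[where n = n, OF that] by (simp add: dB_def dF_def lx_def dx_def)
  have dB_LZ: "dB (Lam j r) = 0" "dB (Zed l r) = 0" for j l r
    unfolding dB_def by (rule Bbar_diff_Lam_Zed)+
  have du: "vsub u v (Xe j i k) = dx (j, i, k)" for j i k
    by (simp add: dx_def vsub_def xpart_def)
  have inner: "ip (WI N M n m) (vsub u v) dB = T1 + T2"
    unfolding ip_def sum_WI T1_def T2_def
    by (simp add: dB_Xe dB_LZ du distrib_left sum.distrib)
  have "ip (WI N M n m) dB dB = (\<Sum>j<N. \<Sum>i<N. \<Sum>k<n i. (RT N n dF (j, i, k) + lx (j, i, k))\<^sup>2)"
    unfolding ip_def sum_WI by (simp add: dB_Xe dB_LZ power2_eq_square)
  also have "\<dots> \<le> 2 * ip (PI N n) dF dF + 2 * B2"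
  proof -
    have "(p + q)\<^sup>2 \<le> 2 * p\<^sup>2 + 2 * q\<^sup>2" for p q :: real
      using zero_le_power2[of "p - q"] by (simp add: power2_eq_square algebra_simps)
    then show ?thesis
      unfolding B2_def sum_sq_RT[symmetric]
      by (simp add: sum_mono sum.distrib sum_distrib_left flip: sum.distrib)
  qed
  finally have norm: "ip (WI N M n m) dB dB \<le> 2 * ip (PI N n) dF dF + 2 * B2" .
  have T1: "chi * ip (PI N n) dF dF \<le> T1"
    using a4 xpart_in_space[OF u] xpart_in_space[OF v]
    unfolding assumption4_def T1_def dF_def dx_def ip_def sum_XI RT_diff by blast
  have "\<forall>j<N. Lap M etl ehd j j \<le> dstar N M etl ehd" using Lap_diag_le_dstar by blast
  then have B2: "B2 \<le> 2 * dstar N M etl ehd * T2"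
    unfolding B2_def T2_def lx_def by (simp add: Lap_blocks_sq_le[OF edges])
  have T2: "0 \<le> T2" unfolding T2_def lx_def using Lap_blocks_form_nonneg by simp
  show "\<beta> * ip (WI N M n m) dB dB \<le> ip (WI N M n m) (vsub u v) dB"
    unfolding inner using cocoercivity_constant_bounds[OF dstar_nonneg[OF N] \<beta>(2)] \<beta>(1)
    by (intro cocoercive_sum_ineq[OF T1 B2 ip_self_nonneg T2 _ _ _ norm]) (auto simp: mult.assoc)
qed

theorem lemma3:
  fixes N M m :: nat and n :: "nat \<Rightarrow> nat"
    and \<Omega> :: "nat \<Rightarrow> (nat \<Rightarrow> real) set"
    and A :: "nat \<Rightarrow> nat \<Rightarrow> nat \<Rightarrow> real" and b :: "nat \<Rightarrow> nat \<Rightarrow> real"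
    and f :: "nat \<Rightarrow> (nat \<times> nat \<Rightarrow> real) \<Rightarrow> real"
    and g :: "nat \<Rightarrow> (nat \<times> nat \<Rightarrow> real) \<Rightarrow> (nat \<Rightarrow> real)"
    and etl ehd :: "nat \<Rightarrow> nat" and chi :: real
  assumes "N \<ge> 1"
    and "graph_ok N M etl ehd"
    and "partial_gradients N n f g"
    and "assumption1 N n m \<Omega> A b f"
    and "assumption4 N n g chi"
  shows "maximally_monotone (WI N M n m) (Abar N M n m etl ehd \<Omega> A)
       \<and> (\<forall>\<beta>. 0 < \<beta> \<and>
             \<beta> < (if dstar N M etl ehd = 0 then chi / 2
                   else min chi (1 / (2 * dstar N M etl ehd)) / 2)
           \<longrightarrow> cocoercive (WI N M n m) (Bbar N M n m etl ehd b g) \<beta>)"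
proof -
  have \<Omega>: "\<forall>i<N. closed (\<Omega> i) \<and> convex_set {..<n i} (\<Omega> i)"
    and ne: "OmegaP N n \<Omega> \<noteq> {}"
    using assms(4) OmegaP_nonempty by (auto simp: assumption1_def)
  have edges: "\<forall>l<M. etl l < N \<and> ehd l < N \<and> etl l \<noteq> ehd l"
    using assms(2) by (simp add: graph_ok_def)
  show ?thesis
    using Abar_maximally_monotone[OF \<Omega> ne] Bbar_cocoercive[OF assms(1) edges assms(5)] by blast
qed

end
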